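(* Let $A$ be a real symmetric $n\times n$ matrix with smallest eigenvalue $\bar\lambda$, let $a,x_0,b_2,\dots,b_m\in\mathbb{R}^n$, $\alpha>0$, $\beta_2,\dots,\beta_m\in\mathbb{R}$, and define $f(x)=x^TAx+a^Tx$, $h_1(x)=\|x-x_0\|^2-\alpha$, $h_i(x)=b_i^Tx-\beta_i$ for $i=2,\dots,m$. Assume (H4) the system $Av-\bar\lambda v=0$, $b_i^Tv=0$ ($i=2,\dots,m$) has a nonzero solution $v\in\mathbb{R}^n$. Then the system $Av-\bar\lambda v=0$, $(a+2\bar\lambda x_0)^Tv\le 0$, $b_i^Tv\le 0$ ($i=2,\dots,m$) has a nonzero solution, and the set $\mathrm{U}(f,h_1,\dots,h_m)$ is convex.
   Context: $\mathrm{U}(f,h_1,\dots,h_m):=\{(f(x),h_1(x),\dots,h_m(x)) : x\in\mathbb{R}^n\}+\mathbb{R}^{m+1}_+\subset\mathbb{R}^{m+1}$. *)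

theory Defs
  imports "HOL-Analysis.Analysis"
begin

text \<open>Points of R^(m+1) are represented as functions nat => real whose
coordinates 0..m are the relevant ones and all other coordinates are 0.\<close>

definition Uset :: "('x \<Rightarrow> real) \<Rightarrow> (nat \<Rightarrow> 'x \<Rightarrow> real) \<Rightarrow> nat \<Rightarrow> (nat \<Rightarrow> real) set" where
  "Uset f h m = {y. \<exists>x d. (\<forall>j\<le>m. d j \<ge> 0) \<and>
      y = (\<lambda>j. if j = 0 then f x + d 0 else if j \<le> m then h j x + d j else 0)}"

definition convex_Rvec :: "(nat \<Rightarrow> real) set \<Rightarrow> bool" where
  "convex_Rvec S \<longleftrightarrow> (\<forall>u\<in>S. \<forall>v\<in>S. \<forall>t::real. 0 \<le> t \<and> t \<le> 1 \<longrightarrow>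
      (\<lambda>j. (1 - t) * u j + t * v j) \<in> S)"

definition is_eigenvalue :: "real^'n^'n \<Rightarrow> real \<Rightarrow> bool" where
  "is_eigenvalue A mu \<longleftrightarrow> (\<exists>v. v \<noteq> 0 \<and> A *v v = mu *\<^sub>R v)"

end

theory Submission
  imports Defs
begin

text \<open>
  Put \<open>c = a + 2 \<lambda> x\<^sub>0\<close>. Then \<open>f = \<lambda> h\<^sub>1 + g + const\<close> with
  \<open>g x = x\<^sup>T (A - \<lambda> I) x + c\<^sup>T x\<close>, and \<open>g\<close> is convex because \<open>\<lambda>\<close> is the smallest
  eigenvalue of \<open>A\<close>. Flipping the sign of the vector from (H4) if necessary gives an eigenvector
  \<open>v\<close> with \<open>c\<^sup>T v \<le> 0\<close> and \<open>b\<^sub>i\<^sup>T v = 0\<close>. For the convexity of \<open>U\<close> it suffices to find, for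
  any \<open>x\<close>, \<open>y\<close> and \<open>t \<in> [0,1]\<close>, a point \<open>z\<close> at which \<open>f, h\<^sub>1, \<dots>, h\<^sub>m\<close> are bounded by the
  corresponding convex combinations of their values at \<open>x\<close> and \<open>y\<close>. Start at
  \<open>w = (1 - t) x + t y\<close>, where \<open>h\<^sub>1\<close> is at most its convex combination, and move along
  \<open>v\<close> until \<open>h\<^sub>1\<close> equals it. The affine \<open>h\<^sub>i\<close> do not change, the quadratic part of \<open>g\<close>
  is constant along the kernel of \<open>A - \<lambda> I\<close> and its linear part does not increase, so
  \<open>f = \<lambda> h\<^sub>1 + g + const\<close> is bounded by its convex combination as well, whatever the sign
  of \<open>\<lambda>\<close>.
\<close>

lemma inner_matrix_symmetric:
  fixes A :: "real^'n^'n"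
  assumes "transpose A = A"
  shows "x \<bullet> (A *v y) = (A *v x) \<bullet> y"
  by (metis assms dot_lmul_matrix transpose_matrix_vector)

lemma transpose_diff_scalar_mat:
  fixes A :: "real^'n^'n"
  shows "transpose (A - c *\<^sub>R mat 1) = transpose A - c *\<^sub>R mat 1"
  by (simp add: transpose_def mat_def vec_eq_iff)

lemma inner_diff_scalar_mat:
  fixes A :: "real^'n^'n"
  shows "x \<bullet> ((A - c *\<^sub>R mat 1) *v y) = x \<bullet> (A *v y) - c * (x \<bullet> y)"
  by (simp add: matrix_vector_mult_diff_rdistrib inner_diff_right flip: scaleR_matrix_vector_assoc)

lemma psd_quadratic_form_eq_0_imp_kernel:
  fixes B :: "real^'n^'n"
  assumes symm: "transpose B = B" and psd: "\<And>w. 0 \<le> w \<bullet> (B *v w)"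
    and zero: "u \<bullet> (B *v u) = 0"
  shows "B *v u = 0"
proof (rule ccontr)
  define r where "r = B *v u"
  define p where "p = r \<bullet> (B *v r)"
  assume "B *v u \<noteq> 0"
  then have r: "0 < r \<bullet> r"
    by (simp add: r_def)
  have p: "0 \<le> p"
    by (simp add: p_def psd)
  have expand: "(u + s *\<^sub>R r) \<bullet> (B *v (u + s *\<^sub>R r)) = 2 * s * (r \<bullet> r) + s\<^sup>2 * p" for s
    using zero inner_matrix_symmetric[OF symm, of u r]
    by (simp add: p_def r_def matrix_vector_right_distrib matrix_vector_mult_scaleR
        inner_add_left inner_add_right inner_commute power2_eq_square algebra_simps)
  define s where "s = - (r \<bullet> r) / (p + 1)"
  have s: "s < 0" "s * p = - (r \<bullet> r) - s"
    using r p by (simp_all add: s_def field_simps)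
  have "2 * s * (r \<bullet> r) + s\<^sup>2 * p = 2 * s * (r \<bullet> r) + s * (s * p)"
    by (simp add: power2_eq_square)
  also have "\<dots> = s * ((r \<bullet> r) - s)"
    unfolding s(2) by (simp add: algebra_simps)
  also have "\<dots> < 0"
    using r s(1) by (intro mult_neg_pos) linarith+
  finally show False
    using psd[of "u + s *\<^sub>R r"] expand by simp
qed

lemma min_eigenvalue_le_rayleigh:
  fixes A :: "real^'n^'n"
  assumes symm: "transpose A = A" and lam_min: "\<And>mu. is_eigenvalue A mu \<Longrightarrow> lam \<le> mu"
  shows "lam * (u \<bullet> u) \<le> u \<bullet> (A *v u)"
proof -
  let ?Q = "\<lambda>w::real^'n. w \<bullet> (A *v w)"
  have "continuous_on (sphere 0 1) ?Q"
    by (intro continuous_intros linear_continuous_on matrix_vector_mul_bounded_linear)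
  moreover obtain e :: "real^'n" where "norm e = 1"
    using vector_choose_size[of 1] by auto
  then have "sphere (0::real^'n) 1 \<noteq> {}"
    by auto
  ultimately obtain u0 where u0: "u0 \<in> sphere 0 1"
    and u0_min: "\<And>w. w \<in> sphere 0 1 \<Longrightarrow> ?Q u0 \<le> ?Q w"
    using continuous_attains_inf[OF compact_sphere] by blast
  define mu where "mu = ?Q u0"
  \<comment> \<open>\<open>A - mu I\<close> is positive semidefinite and its form vanishes at \<open>u0\<close>, so \<open>mu\<close> is an eigenvalue.\<close>
  have ge: "mu * (w \<bullet> w) \<le> ?Q w" for w
  proof (cases "w = 0")
    case False
    define c where "c = inverse (norm w)"
    have "mu \<le> ?Q (c *\<^sub>R w)"
      unfolding mu_def using False by (intro u0_min) (simp add: c_def)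
    also have "\<dots> = ?Q w / (w \<bullet> w)"
      by (simp add: c_def matrix_vector_mult_scaleR dot_square_norm field_simps power2_eq_square)
    finally show ?thesis
      using False by (simp add: pos_le_divide_eq)
  qed simp
  have "(A - mu *\<^sub>R mat 1) *v u0 = 0"
    using symm ge u0
    by (intro psd_quadratic_form_eq_0_imp_kernel)
      (simp_all add: transpose_diff_scalar_mat inner_diff_scalar_mat mu_def dot_square_norm)
  then have "is_eigenvalue A mu"
    unfolding is_eigenvalue_def using u0
    by (intro exI[of _ u0]) (auto simp: matrix_vector_mult_diff_rdistrib simp flip: scaleR_matrix_vector_assoc)
  then have "lam * (u \<bullet> u) \<le> mu * (u \<bullet> u)"
    by (simp add: lam_min mult_right_mono)
  with ge[of u] show ?thesis
    by linarith
qed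

lemma quadratic_eq_norm_diff_power2_plus_shifted:
  fixes A :: "real^'n^'n"
  shows "x \<bullet> (A *v x) + a \<bullet> x = lam * (norm (x - x0))\<^sup>2
      + (x \<bullet> ((A - lam *\<^sub>R mat 1) *v x) + (a + (2 * lam) *\<^sub>R x0) \<bullet> x) - lam * (x0 \<bullet> x0)"
  unfolding inner_diff_scalar_mat power2_norm_eq_inner
  by (simp add: inner_add_left inner_diff_left inner_diff_right inner_commute algebra_simps)

lemma quadratic_form_convex_combination:
  fixes B :: "real^'n^'n"
  shows "(1 - t) * (x \<bullet> (B *v x)) + t * (y \<bullet> (B *v y))
      - ((1 - t) *\<^sub>R x + t *\<^sub>R y) \<bullet> (B *v ((1 - t) *\<^sub>R x + t *\<^sub>R y))
    = t * (1 - t) * ((x - y) \<bullet> (B *v (x - y)))"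
  by (simp add: inner_add_left inner_add_right inner_diff_left inner_diff_right
      matrix_vector_right_distrib matrix_vector_mult_diff_distrib matrix_vector_mult_scaleR
      algebra_simps)

lemma convex_on_psd_quadratic:
  fixes B :: "real^'n^'n"
  assumes psd: "\<And>w. 0 \<le> w \<bullet> (B *v w)"
  shows "convex_on UNIV (\<lambda>x. x \<bullet> (B *v x) + c \<bullet> x)"
proof (rule convex_onI)
  fix t :: real and x y :: "real^'n"
  assume "0 < t" "t < 1"
  then have "0 \<le> t * (1 - t) * ((x - y) \<bullet> (B *v (x - y)))"
    using psd by simp
  then show "((1 - t) *\<^sub>R x + t *\<^sub>R y) \<bullet> (B *v ((1 - t) *\<^sub>R x + t *\<^sub>R y)) + c \<bullet> ((1 - t) *\<^sub>R x + t *\<^sub>R y)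
      \<le> (1 - t) * (x \<bullet> (B *v x) + c \<bullet> x) + t * (y \<bullet> (B *v y) + c \<bullet> y)"
    using quadratic_form_convex_combination[of t x B y] by (simp add: inner_add_right algebra_simps)
qed simp

lemma quadratic_form_add_kernel:
  fixes B :: "real^'n^'n"
  assumes "transpose B = B" and "B *v v = 0"
  shows "(w + s *\<^sub>R v) \<bullet> (B *v (w + s *\<^sub>R v)) = w \<bullet> (B *v w)"
  using inner_matrix_symmetric[OF assms(1), of v w] assms(2)
  by (simp add: matrix_vector_right_distrib matrix_vector_mult_scaleR inner_add_left inner_add_right)

lemma convex_on_norm_diff_power2: "convex_on UNIV (\<lambda>z::'a::real_inner. (norm (z - c))\<^sup>2)"
proof (rule convex_onI)
  fix t :: real and x y :: 'a
  assume "0 < t" "t < 1"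
  moreover have "(1 - t) * (norm (x - c))\<^sup>2 + t * (norm (y - c))\<^sup>2 - (norm ((1 - t) *\<^sub>R x + t *\<^sub>R y - c))\<^sup>2
      = t * (1 - t) * (norm (x - y))\<^sup>2"
    by (simp add: power2_norm_eq_inner inner_add_left inner_add_right inner_diff_left inner_diff_right
        inner_commute algebra_simps)
  ultimately show "(norm ((1 - t) *\<^sub>R x + t *\<^sub>R y - c))\<^sup>2 \<le> (1 - t) * (norm (x - c))\<^sup>2 + t * (norm (y - c))\<^sup>2"
    by (smt (verit) mult_nonneg_nonneg zero_le_power2)
qed simp

lemma exists_nonneg_scale_norm_eq:
  fixes u v :: "'a::real_normed_vector"
  assumes "v \<noteq> 0" and "norm u \<le> r"
  shows "\<exists>s\<ge>0. norm (u + s *\<^sub>R v) = r"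
proof -
  define b where "b = (r + norm u) / norm v"
  have "0 \<le> r + norm u"
    using assms(2) norm_ge_zero[of u] by linarith
  then have b: "0 \<le> b" "norm (b *\<^sub>R v) = r + norm u"
    using assms(1) by (simp_all add: b_def)
  have "norm (b *\<^sub>R v) \<le> norm (u + b *\<^sub>R v) + norm u"
    by (metis add_diff_cancel_left' norm_triangle_ineq4)
  then have "r \<le> norm (u + b *\<^sub>R v)"
    using b by simp
  moreover have "continuous_on {0..b} (\<lambda>s. norm (u + s *\<^sub>R v))"
    by (intro continuous_intros)
  ultimately show ?thesis
    using IVT'[of "\<lambda>s. norm (u + s *\<^sub>R v)" 0 r b] assms b by auto
qed

lemma exists_scale_norm_power2_eq_convex_combination:
  fixes x y v c :: "'a::real_inner"
  assumes "v \<noteq> 0" and "0 \<le> t" and "t \<le> 1"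
  shows "\<exists>s\<ge>0. (norm ((1 - t) *\<^sub>R x + t *\<^sub>R y + s *\<^sub>R v - c))\<^sup>2
      = (1 - t) * (norm (x - c))\<^sup>2 + t * (norm (y - c))\<^sup>2"
proof -
  define w where "w = (1 - t) *\<^sub>R x + t *\<^sub>R y"
  define R where "R = (1 - t) * (norm (x - c))\<^sup>2 + t * (norm (y - c))\<^sup>2"
  have "(norm (w - c))\<^sup>2 \<le> R"
    unfolding w_def R_def using assms convex_onD[OF convex_on_norm_diff_power2] by blast
  moreover from this have "0 \<le> R"
    using zero_le_power2[of "norm (w - c)"] by linarith
  ultimately obtain s where "0 \<le> s" "norm (w - c + s *\<^sub>R v) = sqrt R"
    using exists_nonneg_scale_norm_eq[OF assms(1), of "w - c" "sqrt R"] by (auto simp: real_le_rsqrt)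
  with \<open>0 \<le> R\<close> show ?thesis
    unfolding w_def R_def by (intro exI[of _ s]) (simp add: algebra_simps)
qed

lemma convex_Rvec_UsetI:
  assumes better: "\<And>x y t. 0 \<le> t \<Longrightarrow> t \<le> 1 \<Longrightarrow> \<exists>z. f z \<le> (1 - t) * f x + t * f y \<and>
      (\<forall>j\<in>{1..m}. h j z \<le> (1 - t) * h j x + t * h j y)"
  shows "convex_Rvec (Uset f h m)"
  unfolding convex_Rvec_def
proof (intro ballI allI impI)
  fix u v and t :: real
  assume "u \<in> Uset f h m" "v \<in> Uset f h m" and t: "0 \<le> t \<and> t \<le> 1"
  then obtain x d y e where d: "\<forall>j\<le>m. 0 \<le> d j" and e: "\<forall>j\<le>m. 0 \<le> e j"
    and u: "u = (\<lambda>j. if j = 0 then f x + d 0 else if j \<le> m then h j x + d j else 0)"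
    and v: "v = (\<lambda>j. if j = 0 then f y + e 0 else if j \<le> m then h j y + e j else 0)"
    unfolding Uset_def by blast
  obtain z where fz: "f z \<le> (1 - t) * f x + t * f y"
    and hz: "\<forall>j\<in>{1..m}. h j z \<le> (1 - t) * h j x + t * h j y"
    using better t by blast
  define D where "D j = (1 - t) * u j + t * v j - (if j = 0 then f z else h j z)" for j
  show "(\<lambda>j. (1 - t) * u j + t * v j) \<in> Uset f h m"
    unfolding Uset_def
  proof (intro CollectI exI[of _ z] exI[of _ D] conjI allI impI)
    fix j assume "j \<le> m"
    have "0 \<le> (1 - t) * d j + t * e j"
      using d e t \<open>j \<le> m\<close> by simp
    moreover have "j \<noteq> 0 \<Longrightarrow> h j z \<le> (1 - t) * h j x + t * h j y"
      using hz \<open>j \<le> m\<close> by simp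
    ultimately show "0 \<le> D j"
      using fz \<open>j \<le> m\<close> by (cases "j = 0") (auto simp: D_def u v algebra_simps)
  qed (auto simp: D_def u v)
qed

lemma convex_Rvec_Uset_quadratic_ball:
  fixes A :: "real^'n^'n" and a x0 v :: "real^'n" and b :: "nat \<Rightarrow> real^'n"
    and f :: "real^'n \<Rightarrow> real" and h :: "nat \<Rightarrow> real^'n \<Rightarrow> real"
  assumes symm: "transpose A = A"
    and rayleigh: "\<And>u. lam * (u \<bullet> u) \<le> u \<bullet> (A *v u)"
    and v: "v \<noteq> 0" "A *v v = lam *\<^sub>R v" "\<forall>i\<in>{2..m}. b i \<bullet> v = 0"
    and descent: "(a + (2 * lam) *\<^sub>R x0) \<bullet> v \<le> 0"
    and f_def: "\<And>x. f x = x \<bullet> (A *v x) + a \<bullet> x"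
    and h1_def: "\<And>x. h 1 x = (norm (x - x0))\<^sup>2 - alpha"
    and hi_def: "\<And>i x. i \<in> {2..m} \<Longrightarrow> h i x = b i \<bullet> x - beta i"
  shows "convex_Rvec (Uset f h m)"
proof (rule convex_Rvec_UsetI)
  fix x y :: "real^'n" and t :: real
  assume t: "0 \<le> t" "t \<le> 1"
  define B where "B = A - lam *\<^sub>R mat 1"
  define c where "c = a + (2 * lam) *\<^sub>R x0"
  define g where "g z = z \<bullet> (B *v z) + c \<bullet> z" for z
  define w where "w = (1 - t) *\<^sub>R x + t *\<^sub>R y"
  have f_split: "f z = lam * h 1 z + g z + lam * (alpha - x0 \<bullet> x0)" for z
    unfolding f_def h1_def g_def B_def c_def quadratic_eq_norm_diff_power2_plus_shifted[of z A a lam x0]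
    by (simp add: algebra_simps)
  have "convex_on UNIV g"
    unfolding g_def B_def using rayleigh
    by (intro convex_on_psd_quadratic) (simp add: inner_diff_scalar_mat)
  then have g_w: "g w \<le> (1 - t) * g x + t * g y"
    unfolding w_def using t by (simp add: convex_onD)
  obtain s where "0 \<le> s"
    and s: "(norm (w + s *\<^sub>R v - x0))\<^sup>2 = (1 - t) * (norm (x - x0))\<^sup>2 + t * (norm (y - x0))\<^sup>2"
    unfolding w_def using exists_scale_norm_power2_eq_convex_combination[OF v(1) t] by blast
  define z where "z = w + s *\<^sub>R v"
  have h1_z: "h 1 z = (1 - t) * h 1 x + t * h 1 y"
    unfolding h1_def z_def s by (simp add: algebra_simps)
  have "B *v v = 0"
    using v(2) by (simp add: B_def matrix_vector_mult_diff_rdistrib flip: scaleR_matrix_vector_assoc)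
  then have "g z = g w + s * (c \<bullet> v)"
    using quadratic_form_add_kernel[of B v w s] symm
    by (simp add: g_def z_def B_def transpose_diff_scalar_mat inner_add_right)
  then have "g z \<le> (1 - t) * g x + t * g y"
    using g_w descent \<open>0 \<le> s\<close> mult_nonneg_nonpos[of s "c \<bullet> v"] by (simp add: c_def)
  moreover have "(1 - t) * f x + t * f y - f z = (1 - t) * g x + t * g y - g z"
    unfolding f_split h1_z by (simp add: algebra_simps)
  ultimately have "f z \<le> (1 - t) * f x + t * f y"
    by linarith
  moreover have "h j z \<le> (1 - t) * h j x + t * h j y" if "j \<in> {1..m}" for j
  proof (cases "j = 1")
    case True
    then show ?thesis
      using h1_z by simp
  next
    case False
    then have "j \<in> {2..m}"
      using that by auto
    then show ?thesis
      using v(3) by (simp add: hi_def z_def w_def inner_add_right algebra_simps)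
  qed
  ultimately show "\<exists>z. f z \<le> (1 - t) * f x + t * f y \<and>
      (\<forall>j\<in>{1..m}. h j z \<le> (1 - t) * h j x + t * h j y)"
    by blast
qed

theorem proposition3p3:
  fixes A :: "real^'n^'n" and a x0 :: "real^'n" and b :: "nat \<Rightarrow> real^'n"
    and alpha lam :: real and beta :: "nat \<Rightarrow> real" and m :: nat
    and f :: "real^'n \<Rightarrow> real" and h :: "nat \<Rightarrow> real^'n \<Rightarrow> real"
  assumes m: "m \<ge> 1"
    and symm: "transpose A = A"
    and lam_eig: "is_eigenvalue A lam"
    and lam_min: "\<And>mu. is_eigenvalue A mu \<Longrightarrow> lam \<le> mu"
    and alpha: "alpha > 0"
    and f_def: "\<And>x. f x = x \<bullet> (A *v x) + a \<bullet> x"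
    and h1_def: "\<And>x. h 1 x = (norm (x - x0))\<^sup>2 - alpha"
    and hi_def: "\<And>i x. i \<in> {2..m} \<Longrightarrow> h i x = b i \<bullet> x - beta i"
    and H4: "\<exists>v. v \<noteq> 0 \<and> A *v v - lam *\<^sub>R v = 0 \<and> (\<forall>i\<in>{2..m}. b i \<bullet> v = 0)"
  shows "(\<exists>v. v \<noteq> 0 \<and> A *v v - lam *\<^sub>R v = 0 \<and> (a + (2 * lam) *\<^sub>R x0) \<bullet> v \<le> 0
             \<and> (\<forall>i\<in>{2..m}. b i \<bullet> v \<le> 0))
         \<and> convex_Rvec (Uset f h m)"
proof -
  obtain v0 where v0: "v0 \<noteq> 0" "A *v v0 = lam *\<^sub>R v0" "\<forall>i\<in>{2..m}. b i \<bullet> v0 = 0"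
    using H4 by auto
  obtain v where v: "v \<noteq> 0" "A *v v = lam *\<^sub>R v" "\<forall>i\<in>{2..m}. b i \<bullet> v = 0"
    and descent: "(a + (2 * lam) *\<^sub>R x0) \<bullet> v \<le> 0"
  proof (cases "(a + (2 * lam) *\<^sub>R x0) \<bullet> v0 \<le> 0")
    case True
    then show ?thesis
      using that v0 by blast
  next
    case False
    then show ?thesis
      using that[of "- v0"] v0 matrix_vector_mult_scaleR[of A "-1" v0] by simp
  qed
  have "convex_Rvec (Uset f h m)"
    using convex_Rvec_Uset_quadratic_ball[OF symm min_eigenvalue_le_rayleigh[OF symm lam_min]
        v descent f_def h1_def hi_def] .
  with v descent show ?thesis
    by auto
qed

end
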